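(* Let $\mathbb{F}_q$ have characteristic $p\neq2$, $f(X)=aX^2+c\in\mathbb{F}_q[X]$ with $a\ne0$, $r\ge1$, $k\ge 2$, and let $(x_1,\dots,x_k)\in\overline{\mathbb{F}_q}^{\,k}$ satisfy $f^r(x_1)=\dots=f^r(x_k)$. For distinct $i,j\in\{1,\dots,k\}$ let $d(i,j)=d(j,i)$ be the smallest $d\in\{-1,0,1,\dots,r-1\}$ with $\phi(x_i,x_j;d)=0$ (such $d$ exists). Then the complete weighted graph on $\{1,\dots,k\}$ with edge weights $d(i,j)$ is proper.
   Context: Iterates: $f^0(X)=X$, $f^{j+1}(X)=f(f^j(X))$. Define $\phi(X,Y;-1)=X-Y$ and $\phi(X,Y;d)=f^d(X)+f^d(Y)$ for integers $d\ge 0$. A $(D,k)$-graph is a weighted graph on $k$ vertices in which each edge $ij$ carries an integer weight $d(i,j)\in[-1,D]$; it is complete if every pair of distinct vertices is joined by an edge. A complete $(D,k)$-graph is proper if for all distinct vertices $a,b,c$ with $d(a,b)\le d(a,c)\le d(b,c)$ one has either $d(a,b)=d(a,c)=d(b,c)=-1$, or $d(a,b)<d(a,c)=d(b,c)$. *)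

theory Defs
  imports "HOL-Computational_Algebra.Polynomial"
begin

definition is_subfield :: "'a::field set \<Rightarrow> bool" where
  "is_subfield F \<longleftrightarrow> 0 \<in> F \<and> 1 \<in> F \<and>
     (\<forall>x\<in>F. \<forall>y\<in>F. x + y \<in> F \<and> x * y \<in> F) \<and>
     (\<forall>x\<in>F. - x \<in> F \<and> inverse x \<in> F)"

definition is_algebraic_closure_of :: "'a::field set \<Rightarrow> bool" where
  "is_algebraic_closure_of F \<longleftrightarrow> is_subfield F \<and>
     (\<forall>p :: 'a poly. degree p > 0 \<longrightarrow> (\<exists>x. poly p x = 0)) \<and>
     (\<forall>x :: 'a. \<exists>p :: 'a poly. p \<noteq> 0 \<and> (\<forall>i. coeff p i \<in> F) \<and> poly p x = 0)"

definition phi :: "('a::ring \<Rightarrow> 'a) \<Rightarrow> 'a \<Rightarrow> 'a \<Rightarrow> int \<Rightarrow> 'a" where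
  "phi f X Y d = (if d = -1 then X - Y else (f ^^ nat d) X + (f ^^ nat d) Y)"

definition complete_Dk_graph :: "int \<Rightarrow> nat \<Rightarrow> (nat \<Rightarrow> nat \<Rightarrow> int) \<Rightarrow> bool" where
  "complete_Dk_graph D k w \<longleftrightarrow>
     (\<forall>i\<in>{1..k}. \<forall>j\<in>{1..k}. i \<noteq> j \<longrightarrow> w i j = w j i \<and> -1 \<le> w i j \<and> w i j \<le> D)"

definition proper_graph :: "nat \<Rightarrow> (nat \<Rightarrow> nat \<Rightarrow> int) \<Rightarrow> bool" where
  "proper_graph k w \<longleftrightarrow>
     (\<forall>a\<in>{1..k}. \<forall>b\<in>{1..k}. \<forall>c\<in>{1..k}.
        a \<noteq> b \<and> a \<noteq> c \<and> b \<noteq> c \<and> w a b \<le> w a c \<and> w a c \<le> w b c \<longrightarrow>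
        (w a b = -1 \<and> w a c = -1 \<and> w b c = -1) \<or> (w a b < w a c \<and> w a c = w b c))"

end

theory Submission
  imports Defs
begin

text \<open>Write \<open>m(i,j)\<close> for the first time \<open>n\<close> with \<open>f\<^sup>n(x\<^sub>i) = f\<^sup>n(x\<^sub>j)\<close>. Since
  \<open>f(X) = f(Y)\<close> exactly when \<open>X = \<plusminus>Y\<close>, the first vanishing \<open>\<phi>(x\<^sub>i,x\<^sub>j;d)\<close> occurs at
  \<open>d = m(i,j) - 1\<close>: for \<open>m(i,j) > 0\<close> the last distinct iterates are negatives of each other.
  Collision times are an ultrametric, so in every triangle the two largest weights agree.
  If all three agree and are positive, the iterates \<open>y\<^sub>a, y\<^sub>b, y\<^sub>c\<close> one step earlier are
  pairwise negatives, which forces \<open>y\<^sub>b = y\<^sub>c\<close>, contradicting the minimality of \<open>m(b,c)\<close>.\<close>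

definition collision_time :: "('a \<Rightarrow> 'a) \<Rightarrow> 'a \<Rightarrow> 'a \<Rightarrow> nat" where
  "collision_time f u v = (LEAST n. (f ^^ n) u = (f ^^ n) v)"

lemma funpow_eq_mono:
  fixes f :: "'a \<Rightarrow> 'a"
  assumes "(f ^^ n) u = (f ^^ n) v" and "n \<le> n'"
  shows "(f ^^ n') u = (f ^^ n') v"
  using assms(2)
proof (induction n' rule: dec_induct)
  case base
  then show ?case using assms(1) .
next
  case (step m)
  then show ?case by simp
qed

lemma collision_time_le:
  "(f ^^ n) u = (f ^^ n) v \<Longrightarrow> collision_time f u v \<le> n"
  unfolding collision_time_def by (rule Least_le)

lemma funpow_collision_time:
  "(f ^^ n) u = (f ^^ n) v \<Longrightarrow> (f ^^ collision_time f u v) u = (f ^^ collision_time f u v) v"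
  unfolding collision_time_def by (rule LeastI)

lemma collision_time_commute: "collision_time f u v = collision_time f v u"
  unfolding collision_time_def by metis

lemma collision_time_ultrametric:
  assumes "(f ^^ n) u = (f ^^ n) v" and "(f ^^ n') u = (f ^^ n') w"
  shows "collision_time f v w \<le> max (collision_time f u v) (collision_time f u w)"
proof -
  let ?M = "max (collision_time f u v) (collision_time f u w)"
  have "(f ^^ ?M) u = (f ^^ ?M) v"
    using funpow_eq_mono[OF funpow_collision_time[OF assms(1)]] by simp
  moreover have "(f ^^ ?M) u = (f ^^ ?M) w"
    using funpow_eq_mono[OF funpow_collision_time[OF assms(2)]] by simp
  ultimately show ?thesis by (metis collision_time_le)
qed

locale sign_fibred =
  fixes f :: "'a::ring \<Rightarrow> 'a"
  assumes fibre: "f X = f Y \<longleftrightarrow> X = Y \<or> X = - Y"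
begin

lemma phi_eq_0_imp_collision:
  assumes "-1 \<le> e" and "phi f u v e = 0"
  shows "(f ^^ nat (e + 1)) u = (f ^^ nat (e + 1)) v"
proof (cases "e = -1")
  case True
  then show ?thesis using assms(2) by (simp add: phi_def)
next
  case False
  then have "nat (e + 1) = Suc (nat e)" using assms(1) by simp
  moreover have "(f ^^ nat e) u = - (f ^^ nat e) v"
    using False assms(2) by (simp add: phi_def eq_neg_iff_add_eq_0)
  ultimately show ?thesis using fibre by simp
qed

lemma iterates_before_collision:
  assumes "(f ^^ n) u = (f ^^ n) v" and "collision_time f u v = Suc p"
  shows "(f ^^ p) u = - (f ^^ p) v" and "(f ^^ p) u \<noteq> (f ^^ p) v"
proof -
  show distinct: "(f ^^ p) u \<noteq> (f ^^ p) v"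
    using collision_time_le[of p f u v] assms(2) by fastforce
  have "f ((f ^^ p) u) = f ((f ^^ p) v)"
    using funpow_collision_time[OF assms(1)] assms(2) by simp
  then show "(f ^^ p) u = - (f ^^ p) v" using fibre distinct by blast
qed

lemma phi_collision_time:
  assumes "(f ^^ n) u = (f ^^ n) v"
  shows "phi f u v (int (collision_time f u v) - 1) = 0"
proof (cases "collision_time f u v")
  case 0
  then show ?thesis using funpow_collision_time[OF assms] by (simp add: phi_def)
next
  case (Suc p)
  then show ?thesis using iterates_before_collision(1)[OF assms Suc] by (simp add: phi_def)
qed

lemma Least_phi_eq_0:
  assumes "(f ^^ n) u = (f ^^ n) v"
  shows "(LEAST e. -1 \<le> e \<and> e \<le> int n - 1 \<and> phi f u v e = 0) = int (collision_time f u v) - 1"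
proof (rule Least_equality)
  show "-1 \<le> int (collision_time f u v) - 1 \<and> int (collision_time f u v) - 1 \<le> int n - 1
      \<and> phi f u v (int (collision_time f u v) - 1) = 0"
    using collision_time_le[OF assms] phi_collision_time[OF assms] by simp
next
  fix e assume "-1 \<le> e \<and> e \<le> int n - 1 \<and> phi f u v e = 0"
  then show "int (collision_time f u v) - 1 \<le> e"
    using collision_time_le[OF phi_eq_0_imp_collision] by fastforce
qed

lemma collision_times_not_all_Suc:
  assumes "(f ^^ n) u = (f ^^ n) v" and "(f ^^ n) u = (f ^^ n) w" and "(f ^^ n) v = (f ^^ n) w"
    and "collision_time f u v = Suc p" and "collision_time f u w = Suc p"
  shows "collision_time f v w \<noteq> Suc p"
proof
  assume "collision_time f v w = Suc p"
  then have "(f ^^ p) v \<noteq> (f ^^ p) w" using iterates_before_collision(2)[OF assms(3)] by blast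
  moreover have "(f ^^ p) u = - (f ^^ p) v" "(f ^^ p) u = - (f ^^ p) w"
    using iterates_before_collision(1) assms by blast+
  ultimately show False by simp
qed

lemma proper_graph_collision_times:
  assumes collide: "\<forall>i\<in>{1..k}. \<forall>j\<in>{1..k}. (f ^^ n) (x i) = (f ^^ n) (x j)"
    and weights: "\<forall>i\<in>{1..k}. \<forall>j\<in>{1..k}. d i j = int (collision_time f (x i) (x j)) - 1"
  shows "proper_graph k d"
  unfolding proper_graph_def
proof (intro ballI impI)
  fix a b c assume abc: "a \<in> {1..k}" "b \<in> {1..k}" "c \<in> {1..k}"
    and order: "a \<noteq> b \<and> a \<noteq> c \<and> b \<noteq> c \<and> d a b \<le> d a c \<and> d a c \<le> d b c"
  let ?m = "\<lambda>i j. collision_time f (x i) (x j)"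
  have xab: "(f ^^ n) (x a) = (f ^^ n) (x b)" and xac: "(f ^^ n) (x a) = (f ^^ n) (x c)"
    and xbc: "(f ^^ n) (x b) = (f ^^ n) (x c)" using collide abc by blast+
  have dm: "d a b = int (?m a b) - 1" "d a c = int (?m a c) - 1" "d b c = int (?m b c) - 1"
    using weights abc by blast+
  have le: "?m a b \<le> ?m a c" "?m a c \<le> ?m b c" using order dm by linarith+
  have "?m b c \<le> max (?m a b) (?m a c)" by (rule collision_time_ultrametric[OF xab xac])
  then have top: "?m a c = ?m b c" using le by simp
  have "?m a b < ?m a c \<or> ?m a c = 0"
  proof (cases "?m a c")
    case (Suc p)
    then have "?m a b \<noteq> Suc p" using collision_times_not_all_Suc[OF xab xac xbc] top by metis
    then show ?thesis using Suc le(1) by simp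
  qed simp
  then show "(d a b = -1 \<and> d a c = -1 \<and> d b c = -1) \<or> (d a b < d a c \<and> d a c = d b c)"
  proof
    assume "?m a b < ?m a c"
    then have "d a b < d a c \<and> d a c = d b c" using top dm by linarith
    then show ?thesis ..
  next
    assume "?m a c = 0"
    then have "d a b = -1 \<and> d a c = -1 \<and> d b c = -1" using top le(1) dm by linarith
    then show ?thesis ..
  qed
qed

end

theorem lemma2:
  fixes Fq :: "'a::field set" and a c :: 'a and r k :: nat and x :: "nat \<Rightarrow> 'a"
    and f :: "'a \<Rightarrow> 'a" and d :: "nat \<Rightarrow> nat \<Rightarrow> int"
  assumes "finite Fq" and "is_algebraic_closure_of Fq"
    and "CHAR('a) \<noteq> 2"
    and "a \<in> Fq" and "c \<in> Fq" and "a \<noteq> 0"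
    and "f = (\<lambda>X. a * X ^ 2 + c)"
    and "r \<ge> 1" and "k \<ge> 2"
    and "\<forall>i\<in>{1..k}. \<forall>j\<in>{1..k}. (f ^^ r) (x i) = (f ^^ r) (x j)"
    and "d = (\<lambda>i j. LEAST e. -1 \<le> e \<and> e \<le> int r - 1 \<and> phi f (x i) (x j) e = 0)"
  shows "(\<forall>i\<in>{1..k}. \<forall>j\<in>{1..k}. i \<noteq> j \<longrightarrow>
            (\<exists>e. -1 \<le> e \<and> e \<le> int r - 1 \<and> phi f (x i) (x j) e = 0))
         \<and> complete_Dk_graph (int r - 1) k d \<and> proper_graph k d"
proof -
  interpret sign_fibred f
    by unfold_locales (use assms(6,7) in \<open>simp add: power2_eq_iff\<close>)
  have weights: "\<forall>i\<in>{1..k}. \<forall>j\<in>{1..k}. d i j = int (collision_time f (x i) (x j)) - 1"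
    unfolding assms(11) using Least_phi_eq_0 assms(10) by blast
  have bounds: "\<forall>i\<in>{1..k}. \<forall>j\<in>{1..k}. -1 \<le> d i j \<and> d i j \<le> int r - 1
      \<and> phi f (x i) (x j) (d i j) = 0"
  proof (intro ballI)
    fix i j assume ij: "i \<in> {1..k}" "j \<in> {1..k}"
    then have collide: "(f ^^ r) (x i) = (f ^^ r) (x j)" using assms(10) by blast
    show "-1 \<le> d i j \<and> d i j \<le> int r - 1 \<and> phi f (x i) (x j) (d i j) = 0"
      using collision_time_le[OF collide] phi_collision_time[OF collide] weights ij by simp
  qed
  have "\<forall>i\<in>{1..k}. \<forall>j\<in>{1..k}. d i j = d j i"
    using weights by (metis collision_time_commute)
  then have "complete_Dk_graph (int r - 1) k d"
    unfolding complete_Dk_graph_def using bounds by blast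
  moreover have "proper_graph k d" by (rule proper_graph_collision_times[OF assms(10) weights])
  ultimately show ?thesis using bounds by blast
qed

end
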